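(* Let $S,T$ be measurement scenarios and let $G_{S,T}$ be the set of global assignments $t\in\mathcal E_{[S,T]}(X_T)$ such that $\delta_t$ satisfies $g_{S,T}$. Then probabilistic procedures $S\to T$ correspond bijectively to probability distributions on $G_{S,T}$, via $\sum_ir_if_i\mapsto\sum_ir_i\delta_{t_{f_i}}$ where $t_f=((\pi_f(x),\alpha_{f,x}))_{x\in X_T}$. Moreover, the empirical models $\sum_ir_i\delta_{t_{f_i}}$ on $[S,T]$ arising from probabilistic procedures are exactly the non-contextual empirical models on $[S,T]$ that satisfy $g_{S,T}$.
   Context: A simplicial complex $\Sigma$ on a finite set $X$ is a family of subsets containing $\emptyset$ and all singletons, closed under subsets. A measurement scenario $S=(X_S,O_S,\Sigma_S)$: finite set $X_S$, finite non-empty outcome sets $O_{S,x}$, simplicial complex $\Sigma_S$ of contexts. $\mathcal E_S(U)=\prod_{x\in U}O_{S,x}$, restriction $s|_V$. An empirical model on $S$ is a family $(e_\sigma)_{\sigma\in\Sigma_S}$ of probability distributions on $\mathcal E_S(\sigma)$ compatible under marginalisation; $\delta_t$ is the model with $(\delta_t)_\sigma$ the point mass at $t|_\sigma$; a model is non-contextual if it is a convex combination of deterministic models $\delta_t$. A simplicial relation from $\Sigma$ (on $X$) to $\Delta$ (on $Y$) is a relation $R\subseteq X\times Y$ with $R(\sigma)\in\Delta$ for all $\sigma\in\Sigma$. A deterministic procedure $f\colon S\to T$ is a pair $(\pi_f,\alpha_f)$: $\pi_f$ a simplicial relation from $\Sigma_T$ to $\Sigma_S$ and $\alpha_{f,x}\colon\mathcal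 E_S(\pi_f(x))\to O_{T,x}$ for $x\in X_T$. A probabilistic procedure $S\to T$ is a finitely supported probability distribution on deterministic procedures $S\to T$, written $\sum_ir_if_i$. The scenario $[S,T]$ has $X_{[S,T]}=X_T$, $\Sigma_{[S,T]}=\Sigma_T$, $O_{[S,T],x}=\{(U,\beta):U\subseteq X_S,\ \beta\colon\mathcal E_S(U)\to O_{T,x}\}$. A model $e$ on $[S,T]$ satisfies $g_{S,T}$ iff for every $\sigma\in\Sigma_T$ and every $((U_x,\beta_x))_{x\in\sigma}$ in the support of $e_\sigma$, $\bigcup_{x\in\sigma}U_x\in\Sigma_S$. *)

theory Defs
  imports "HOL-Library.FuncSet" "HOL-Probability.Probability_Mass_Function"
begin

text \<open>Measurement scenarios: measurements of type 'm, outcomes of type 'v.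
  Assignments are extensional functions (undefined outside their domain).\<close>

record ('m, 'v) scenario =
  meas :: "'m set"
  outs :: "'m \<Rightarrow> 'v set"
  ctxs :: "'m set set"

definition simplicial_complex :: "'a set \<Rightarrow> 'a set set \<Rightarrow> bool" where
  "simplicial_complex X K \<longleftrightarrow> K \<subseteq> Pow X \<and> {} \<in> K \<and> (\<forall>x\<in>X. {x} \<in> K)
     \<and> (\<forall>\<sigma>\<in>K. \<forall>\<tau>. \<tau> \<subseteq> \<sigma> \<longrightarrow> \<tau> \<in> K)"

definition scenario :: "('m, 'v) scenario \<Rightarrow> bool" where
  "scenario S \<longleftrightarrow> finite (meas S) \<and> (\<forall>x\<in>meas S. finite (outs S x) \<and> outs S x \<noteq> {})
     \<and> simplicial_complex (meas S) (ctxs S)"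

definition assignments :: "('m, 'v) scenario \<Rightarrow> 'm set \<Rightarrow> ('m \<Rightarrow> 'v) set" where
  "assignments S U = PiE U (outs S)"

definition empirical_model :: "('m, 'v) scenario \<Rightarrow> ('m set \<Rightarrow> ('m \<Rightarrow> 'v) pmf) \<Rightarrow> bool" where
  "empirical_model S e \<longleftrightarrow>
     (\<forall>\<sigma>\<in>ctxs S. set_pmf (e \<sigma>) \<subseteq> assignments S \<sigma>) \<and>
     (\<forall>\<sigma>\<in>ctxs S. \<forall>\<tau>\<in>ctxs S. \<tau> \<subseteq> \<sigma> \<longrightarrow> map_pmf (\<lambda>s. restrict s \<tau>) (e \<sigma>) = e \<tau>)"

definition det_model :: "('m \<Rightarrow> 'v) \<Rightarrow> ('m set \<Rightarrow> ('m \<Rightarrow> 'v) pmf)" where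
  "det_model t = (\<lambda>\<sigma>. return_pmf (restrict t \<sigma>))"

text \<open>The convex combination sum_i r_i delta_{t_i}, given by the finitely supported
  distribution d = sum_i r_i [t_i] on global assignments.\<close>
definition model_of :: "('m \<Rightarrow> 'v) pmf \<Rightarrow> ('m set \<Rightarrow> ('m \<Rightarrow> 'v) pmf)" where
  "model_of d = (\<lambda>\<sigma>. map_pmf (\<lambda>t. restrict t \<sigma>) d)"

definition noncontextual :: "('m, 'v) scenario \<Rightarrow> ('m set \<Rightarrow> ('m \<Rightarrow> 'v) pmf) \<Rightarrow> bool" where
  "noncontextual S e \<longleftrightarrow> (\<exists>d. finite (set_pmf d) \<and> set_pmf d \<subseteq> assignments S (meas S)
      \<and> (\<forall>\<sigma>\<in>ctxs S. e \<sigma> = model_of d \<sigma>))"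

text \<open>Simplicial relation from (X_T, Sigma_T) to (X_S, Sigma_S), given as
  pi : X_T -> Pow X_S (the relation R = {(x,y). y \<in> pi x}); R(sigma) = Union of pi over sigma.\<close>
definition simplicial_relation ::
    "'y set \<Rightarrow> 'y set set \<Rightarrow> 'x set \<Rightarrow> 'x set set \<Rightarrow> ('y \<Rightarrow> 'x set) \<Rightarrow> bool" where
  "simplicial_relation X K Y L \<pi> \<longleftrightarrow>
     \<pi> \<in> X \<rightarrow>\<^sub>E Pow Y \<and> (\<forall>\<sigma>\<in>K. (\<Union>x\<in>\<sigma>. \<pi> x) \<in> L)"

definition det_procs :: "('x, 'o) scenario \<Rightarrow> ('y, 'p) scenario
    \<Rightarrow> (('y \<Rightarrow> 'x set) \<times> ('y \<Rightarrow> ('x \<Rightarrow> 'o) \<Rightarrow> 'p)) set" where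
  "det_procs S T = {(\<pi>, \<alpha>).
      simplicial_relation (meas T) (ctxs T) (meas S) (ctxs S) \<pi> \<and>
      \<alpha> \<in> (\<Pi>\<^sub>E x\<in>meas T. assignments S (\<pi> x) \<rightarrow>\<^sub>E outs T x)}"

definition prob_procs :: "('x, 'o) scenario \<Rightarrow> ('y, 'p) scenario
    \<Rightarrow> (('y \<Rightarrow> 'x set) \<times> ('y \<Rightarrow> ('x \<Rightarrow> 'o) \<Rightarrow> 'p)) pmf set" where
  "prob_procs S T = {P. finite (set_pmf P) \<and> set_pmf P \<subseteq> det_procs S T}"

definition fun_scen :: "('x, 'o) scenario \<Rightarrow> ('y, 'p) scenario
    \<Rightarrow> ('y, 'x set \<times> (('x \<Rightarrow> 'o) \<Rightarrow> 'p)) scenario" where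
  "fun_scen S T = \<lparr> meas = meas T,
      outs = (\<lambda>x. {(U, \<beta>). U \<subseteq> meas S \<and> \<beta> \<in> assignments S U \<rightarrow>\<^sub>E outs T x}),
      ctxs = ctxs T \<rparr>"

definition satisfies_g :: "('x, 'o) scenario \<Rightarrow> ('y, 'p) scenario
    \<Rightarrow> ('y set \<Rightarrow> ('y \<Rightarrow> 'x set \<times> (('x \<Rightarrow> 'o) \<Rightarrow> 'p)) pmf) \<Rightarrow> bool" where
  "satisfies_g S T e \<longleftrightarrow>
     (\<forall>\<sigma>\<in>ctxs T. \<forall>t\<in>set_pmf (e \<sigma>). (\<Union>x\<in>\<sigma>. fst (t x)) \<in> ctxs S)"

definition G :: "('x, 'o) scenario \<Rightarrow> ('y, 'p) scenario
    \<Rightarrow> ('y \<Rightarrow> 'x set \<times> (('x \<Rightarrow> 'o) \<Rightarrow> 'p)) set" where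
  "G S T = {t \<in> assignments (fun_scen S T) (meas T). satisfies_g S T (det_model t)}"

definition t_of :: "('y, 'p) scenario \<Rightarrow> ('y \<Rightarrow> 'x set) \<times> ('y \<Rightarrow> ('x \<Rightarrow> 'o) \<Rightarrow> 'p)
    \<Rightarrow> ('y \<Rightarrow> 'x set \<times> (('x \<Rightarrow> 'o) \<Rightarrow> 'p))" where
  "t_of T f = (\<lambda>x\<in>meas T. (fst f x, snd f x))"

end

theory Submission
  imports Defs
begin

text \<open>A deterministic procedure f and the global assignment t_f carry the same data,
  (\<pi>_f(x), \<alpha>_{f,x}) for every x in X_T, and the simpliciality of \<pi>_f is exactly
  the condition g_{S,T} on \<delta>_{t_f}. So t_of is a bijection from deterministic procedures
  onto G_{S,T}, and pushing distributions forward along it gives the bijection on probabilistic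
  procedures (G_{S,T} is finite, so every distribution on it is finitely supported). The models \<Sum> r_i \<delta>_{t_i} with every t_i in G_{S,T} are precisely the
  non-contextual ones satisfying g_{S,T}, because g_{S,T} only inspects the support of the
  model, which consists of the restrictions of the t_i.\<close>

lemma bij_betw_map_pmf_finite_support:
  assumes "bij_betw f A B"
  shows "bij_betw (map_pmf f) {p. finite (set_pmf p) \<and> set_pmf p \<subseteq> A}
                              {q. finite (set_pmf q) \<and> set_pmf q \<subseteq> B}"
proof (rule bij_betw_byWitness[where f' = "map_pmf (inv_into A f)"])
  have inj: "inj_on f A" and img: "f ` A = B"
    using assms by (auto simp: bij_betw_def)
  show "\<forall>p\<in>{p. finite (set_pmf p) \<and> set_pmf p \<subseteq> A}. map_pmf (inv_into A f) (map_pmf f p) = p"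
    using inv_into_f_f[OF inj] by (auto simp: map_pmf_comp intro!: map_pmf_idI)
  show "\<forall>q\<in>{q. finite (set_pmf q) \<and> set_pmf q \<subseteq> B}. map_pmf f (map_pmf (inv_into A f) q) = q"
    using f_inv_into_f[of _ f A] img by (auto simp: map_pmf_comp intro!: map_pmf_idI)
  show "map_pmf f ` {p. finite (set_pmf p) \<and> set_pmf p \<subseteq> A}
          \<subseteq> {q. finite (set_pmf q) \<and> set_pmf q \<subseteq> B}"
    using img by force
  show "map_pmf (inv_into A f) ` {q. finite (set_pmf q) \<and> set_pmf q \<subseteq> B}
          \<subseteq> {p. finite (set_pmf p) \<and> set_pmf p \<subseteq> A}"
    using img inv_into_into[of _ f A] by force
qed

lemma meas_fun_scen [simp]: "meas (fun_scen S T) = meas T"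
  and ctxs_fun_scen [simp]: "ctxs (fun_scen S T) = ctxs T"
  by (simp_all add: fun_scen_def)

lemma mem_outs_fun_scen_iff:
  "p \<in> outs (fun_scen S T) x \<longleftrightarrow> fst p \<subseteq> meas S \<and> snd p \<in> assignments S (fst p) \<rightarrow>\<^sub>E outs T x"
  by (cases p) (simp add: fun_scen_def)

lemma ctxs_subset_meas: "scenario S \<Longrightarrow> \<sigma> \<in> ctxs S \<Longrightarrow> \<sigma> \<subseteq> meas S"
  unfolding scenario_def simplicial_complex_def by auto

lemma finite_assignments:
  assumes "scenario S" and "U \<subseteq> meas S"
  shows "finite (assignments S U)"
  using assms unfolding scenario_def assignments_def
  by (intro finite_PiE) (auto intro: finite_subset)

lemma satisfies_g_cong:
  assumes "\<forall>\<sigma>\<in>ctxs T. e \<sigma> = e' \<sigma>"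
  shows "satisfies_g S T e \<longleftrightarrow> satisfies_g S T e'"
  using assms unfolding satisfies_g_def by simp

lemma satisfies_g_model_of_iff:
  "satisfies_g S T (model_of d) \<longleftrightarrow>
     (\<forall>t\<in>set_pmf d. \<forall>\<sigma>\<in>ctxs T. (\<Union>x\<in>\<sigma>. fst (t x)) \<in> ctxs S)"
  unfolding satisfies_g_def model_of_def by auto

lemma det_model_eq_model_of: "det_model t = model_of (return_pmf t)"
  by (simp add: det_model_def model_of_def)

lemma mem_G_iff:
  "t \<in> G S T \<longleftrightarrow> t \<in> assignments (fun_scen S T) (meas T) \<and>
     (\<forall>\<sigma>\<in>ctxs T. (\<Union>x\<in>\<sigma>. fst (t x)) \<in> ctxs S)"
  unfolding G_def det_model_eq_model_of satisfies_g_model_of_iff by simp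

lemma set_pmf_subset_G_iff:
  "set_pmf d \<subseteq> G S T \<longleftrightarrow>
     set_pmf d \<subseteq> assignments (fun_scen S T) (meas T) \<and> satisfies_g S T (model_of d)"
  unfolding satisfies_g_model_of_iff subset_iff mem_G_iff by blast

lemma finite_G:
  assumes S: "scenario S" and T: "scenario T"
  shows "finite (G S T)"
proof -
  have "finite (outs (fun_scen S T) x)" if "x \<in> meas T" for x
  proof (rule finite_subset)
    show "outs (fun_scen S T) x \<subseteq> (SIGMA U:Pow (meas S). assignments S U \<rightarrow>\<^sub>E outs T x)"
      by (auto simp: mem_outs_fun_scen_iff)
    show "finite (SIGMA U:Pow (meas S). assignments S U \<rightarrow>\<^sub>E outs T x)"
      using S T that finite_assignments[OF S]
      by (intro finite_SigmaI finite_PiE) (auto simp: scenario_def)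
  qed
  then have "finite (assignments (fun_scen S T) (meas T))"
    using T unfolding assignments_def by (intro finite_PiE) (auto simp: scenario_def)
  then show ?thesis
    unfolding G_def by simp
qed

lemma empirical_model_model_of:
  assumes "\<forall>\<sigma>\<in>ctxs S. \<sigma> \<subseteq> meas S" and d: "set_pmf d \<subseteq> assignments S (meas S)"
  shows "empirical_model S (model_of d)"
proof -
  have "restrict t \<sigma> \<in> assignments S \<sigma>" if "t \<in> set_pmf d" "\<sigma> \<in> ctxs S" for t \<sigma>
    using assms that unfolding assignments_def by (auto simp: PiE_iff)
  then show ?thesis
    unfolding empirical_model_def model_of_def by (auto simp: map_pmf_comp Int_absorb1)
qed

definition proc_of :: "('y, 'p) scenario \<Rightarrow> ('y \<Rightarrow> 'x set \<times> (('x \<Rightarrow> 'o) \<Rightarrow> 'p))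
    \<Rightarrow> ('y \<Rightarrow> 'x set) \<times> ('y \<Rightarrow> ('x \<Rightarrow> 'o) \<Rightarrow> 'p)" where
  "proc_of T t = ((\<lambda>x\<in>meas T. fst (t x)), (\<lambda>x\<in>meas T. snd (t x)))"

lemma proc_of_t_of: "f \<in> det_procs S T \<Longrightarrow> proc_of T (t_of T f) = f"
  unfolding det_procs_def simplicial_relation_def proc_of_def t_of_def
  by (cases f) (auto simp: PiE_def extensional_def fun_eq_iff)

lemma t_of_proc_of: "t \<in> G S T \<Longrightarrow> t_of T (proc_of T t) = t"
  unfolding mem_G_iff assignments_def proc_of_def t_of_def fun_scen_def
  by (auto simp: PiE_def extensional_def fun_eq_iff)

lemma t_of_mem_G:
  assumes T: "scenario T" and f: "f \<in> det_procs S T"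
  shows "t_of T f \<in> G S T"
proof -
  obtain \<pi> \<alpha> where f_eq: "f = (\<pi>, \<alpha>)"
    by (cases f)
  have \<pi>: "simplicial_relation (meas T) (ctxs T) (meas S) (ctxs S) \<pi>"
    and \<alpha>: "\<alpha> \<in> (\<Pi>\<^sub>E x\<in>meas T. assignments S (\<pi> x) \<rightarrow>\<^sub>E outs T x)"
    using f unfolding det_procs_def f_eq by auto
  have "t_of T f \<in> assignments (fun_scen S T) (meas T)"
    using \<pi> \<alpha> unfolding assignments_def fun_scen_def t_of_def f_eq simplicial_relation_def
    by (auto simp: PiE_iff)
  moreover have "(\<Union>x\<in>\<sigma>. fst (t_of T f x)) = (\<Union>x\<in>\<sigma>. \<pi> x)" if "\<sigma> \<in> ctxs T" for \<sigma>
    using ctxs_subset_meas[OF T that] unfolding t_of_def f_eq by (intro SUP_cong) auto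
  ultimately show ?thesis
    using \<pi> unfolding mem_G_iff simplicial_relation_def by auto
qed

lemma proc_of_mem_det_procs:
  assumes T: "scenario T" and t: "t \<in> G S T"
  shows "proc_of T t \<in> det_procs S T"
proof -
  have "t x \<in> outs (fun_scen S T) x" if "x \<in> meas T" for x
    using t that unfolding mem_G_iff assignments_def by auto
  then have outs: "fst (t x) \<subseteq> meas S" "snd (t x) \<in> assignments S (fst (t x)) \<rightarrow>\<^sub>E outs T x"
    if "x \<in> meas T" for x
    using that by (simp_all add: mem_outs_fun_scen_iff)
  have "(\<Union>x\<in>\<sigma>. (\<lambda>x\<in>meas T. fst (t x)) x) = (\<Union>x\<in>\<sigma>. fst (t x))" if "\<sigma> \<in> ctxs T" for \<sigma>
    using ctxs_subset_meas[OF T that] by (intro SUP_cong) auto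
  then have "simplicial_relation (meas T) (ctxs T) (meas S) (ctxs S) (\<lambda>x\<in>meas T. fst (t x))"
    using t outs(1) unfolding simplicial_relation_def mem_G_iff by auto
  moreover have "(\<lambda>x\<in>meas T. snd (t x))
      \<in> (\<Pi>\<^sub>E x\<in>meas T. assignments S ((\<lambda>x\<in>meas T. fst (t x)) x) \<rightarrow>\<^sub>E outs T x)"
    using outs(2) by auto
  ultimately show ?thesis
    unfolding det_procs_def proc_of_def by auto
qed

lemma bij_betw_t_of:
  assumes "scenario T"
  shows "bij_betw (t_of T) (det_procs S T) (G S T)"
  by (rule bij_betw_byWitness[where f' = "proc_of T"])
    (use assms proc_of_t_of t_of_proc_of t_of_mem_G proc_of_mem_det_procs in blast)+

lemma bij_betw_map_pmf_t_of:
  assumes S: "scenario S" and T: "scenario T"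
  shows "bij_betw (map_pmf (t_of T)) (prob_procs S T) {d. set_pmf d \<subseteq> G S T}"
proof -
  have "{d. set_pmf d \<subseteq> G S T} = {d. finite (set_pmf d) \<and> set_pmf d \<subseteq> G S T}"
    using finite_G[OF S T] by (auto intro: finite_subset)
  then show ?thesis
    using bij_betw_map_pmf_finite_support[OF bij_betw_t_of[OF T]]
    unfolding prob_procs_def by simp
qed

lemma noncontextual_satisfies_g_iff:
  assumes S: "scenario S" and T: "scenario T"
  shows "noncontextual (fun_scen S T) e \<and> satisfies_g S T e \<longleftrightarrow>
     (\<exists>d. set_pmf d \<subseteq> G S T \<and> (\<forall>\<sigma>\<in>ctxs T. e \<sigma> = model_of d \<sigma>))"
proof
  assume "noncontextual (fun_scen S T) e \<and> satisfies_g S T e"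
  then obtain d where d: "set_pmf d \<subseteq> assignments (fun_scen S T) (meas T)"
    and e: "\<forall>\<sigma>\<in>ctxs T. e \<sigma> = model_of d \<sigma>" and "satisfies_g S T e"
    unfolding noncontextual_def by auto
  then have "satisfies_g S T (model_of d)"
    using satisfies_g_cong[OF e] by simp
  with d e show "\<exists>d. set_pmf d \<subseteq> G S T \<and> (\<forall>\<sigma>\<in>ctxs T. e \<sigma> = model_of d \<sigma>)"
    unfolding set_pmf_subset_G_iff by blast
next
  assume "\<exists>d. set_pmf d \<subseteq> G S T \<and> (\<forall>\<sigma>\<in>ctxs T. e \<sigma> = model_of d \<sigma>)"
  then obtain d where d: "set_pmf d \<subseteq> G S T" and e: "\<forall>\<sigma>\<in>ctxs T. e \<sigma> = model_of d \<sigma>"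
    by blast
  have "finite (set_pmf d)"
    using d finite_G[OF S T] by (rule finite_subset)
  with d e show "noncontextual (fun_scen S T) e \<and> satisfies_g S T e"
    unfolding noncontextual_def set_pmf_subset_G_iff satisfies_g_cong[OF e] by auto
qed

theorem mainTheorem9:
  fixes S :: "('x, 'o) scenario" and T :: "('y, 'p) scenario"
  assumes "scenario S" and "scenario T"
  shows "bij_betw (map_pmf (t_of T)) (prob_procs S T) {d. set_pmf d \<subseteq> G S T} \<and>
    (\<forall>P\<in>prob_procs S T. empirical_model (fun_scen S T) (model_of (map_pmf (t_of T) P))) \<and>
    (\<forall>e. empirical_model (fun_scen S T) e \<longrightarrow>
           ((\<exists>P\<in>prob_procs S T. \<forall>\<sigma>\<in>ctxs T. e \<sigma> = model_of (map_pmf (t_of T) P) \<sigma>)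
            \<longleftrightarrow> noncontextual (fun_scen S T) e \<and> satisfies_g S T e))"
proof -
  have bij: "bij_betw (map_pmf (t_of T)) (prob_procs S T) {d. set_pmf d \<subseteq> G S T}"
    using bij_betw_map_pmf_t_of[OF assms] .
  then have image: "map_pmf (t_of T) ` prob_procs S T = {d. set_pmf d \<subseteq> G S T}"
    by (simp add: bij_betw_def)
  have "empirical_model (fun_scen S T) (model_of d)" if "set_pmf d \<subseteq> G S T" for d
    using that ctxs_subset_meas[OF assms(2)]
    by (intro empirical_model_model_of) (auto simp: set_pmf_subset_G_iff)
  then have model: "empirical_model (fun_scen S T) (model_of (map_pmf (t_of T) P))"
    if "P \<in> prob_procs S T" for P
    using image that by blast
  have "(\<exists>P\<in>prob_procs S T. \<forall>\<sigma>\<in>ctxs T. e \<sigma> = model_of (map_pmf (t_of T) P) \<sigma>)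
      \<longleftrightarrow> (\<exists>d\<in>map_pmf (t_of T) ` prob_procs S T. \<forall>\<sigma>\<in>ctxs T. e \<sigma> = model_of d \<sigma>)" for e
    by blast
  then show ?thesis
    using bij model noncontextual_satisfies_g_iff[OF assms] unfolding image by auto
qed

end
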